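(* Let $\mathcal U$ be a finite nonempty set, $\epsilon_1,\epsilon_2\in(0,1]$, $n_b$ a positive integer, and for each $v\in\mathcal U$ let $a_v\ge0$ be an integer, $\mu_v\in\mathbb R$ and $\sigma_v^2\ge0$. For $p\in[\max\{\epsilon_1,\epsilon_2\},1]$ define $$h_v(p)=\Big(\frac1{\epsilon_2}-\frac1p\Big)a_v^2\mu_v^2n_b+\Big(\frac1{\epsilon_1}-\frac1p\Big)a_v(\mu_v^2+\sigma_v^2)n_b^2+\Big(\frac{p}{\epsilon_1\epsilon_2}-\frac1{\epsilon_1}-\frac1{\epsilon_2}+\frac1p\Big)a_v(\mu_v^2+\sigma_v^2)n_b+\Big(\frac1p-1\Big)a_v^2\mu_v^2n_b^2,$$ $h^*(p)=\max_{v\in\mathcal U}h_v(p)$, and $h'(p)=\max\{h_{v_1}(p),h_{v_2}(p)\}$, where $v_1\in\arg\max_v a_v^2\mu_v^2$ and $v_2\in\arg\max_v a_v(\mu_v^2+\sigma_v^2)$. Then for every $p\in[\max\{\epsilon_1,\epsilon_2\},1]$, $$\frac{h^*(p)}{2}\le h'(p)\le h^*(p).$$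
   Context: Interpretation: $h_v(p)$ is the variance of the SUM join estimator when both tables use universe sampling rate $p$ and uniform sampling rates $\epsilon_1/p$, $\epsilon_2/p$, and all $n_b$ tuples of the second table $T_2$ have join value $v$; $a_v$ is the number of tuples of $T_1$ with join value $v$, and $\mu_v,\sigma_v^2$ are the mean and variance of the aggregated column over those tuples. *)

theory Defs
  imports Complex_Main
begin

text \<open>Variance h_v(p) of the SUM join estimator; a = a_v, mu = mu_v, s2 = sigma_v^2.\<close>
definition hv :: "real \<Rightarrow> real \<Rightarrow> nat \<Rightarrow> nat \<Rightarrow> real \<Rightarrow> real \<Rightarrow> real \<Rightarrow> real" where
  "hv e1 e2 nb a mu s2 p =
     (1/e2 - 1/p) * (real a)^2 * mu^2 * real nb
   + (1/e1 - 1/p) * real a * (mu^2 + s2) * (real nb)^2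
   + (p/(e1*e2) - 1/e1 - 1/e2 + 1/p) * real a * (mu^2 + s2) * real nb
   + (1/p - 1) * (real a)^2 * mu^2 * (real nb)^2"

end

theory Submission
  imports Defs
begin

text \<open>Grouping the four terms of \<open>hv\<close> by their data factors writes
  \<open>h\<^sub>v(p) = (a\<^sub>v\<mu>\<^sub>v)\<^sup>2 \<alpha>(p) + a\<^sub>v(\<mu>\<^sub>v\<^sup>2 + \<sigma>\<^sub>v\<^sup>2) \<beta>(p)\<close> with weights \<open>\<alpha>, \<beta>\<close> that do not depend on \<open>v\<close>
  and are nonnegative for \<open>max \<epsilon>\<^sub>1 \<epsilon>\<^sub>2 \<le> p \<le> 1\<close> (the mixed coefficient
  \<open>p/(\<epsilon>\<^sub>1\<epsilon>\<^sub>2) - 1/\<epsilon>\<^sub>1 - 1/\<epsilon>\<^sub>2 + 1/p\<close> factors as \<open>(p/\<epsilon>\<^sub>1 - 1)(p/\<epsilon>\<^sub>2 - 1)/p\<close>).  Hence \<open>v\<^sub>1\<close> maximises the first summand and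
  \<open>v\<^sub>2\<close> the second, so every \<open>h\<^sub>v(p)\<close> is at most \<open>h\<^sub>v\<^sub>1(p) + h\<^sub>v\<^sub>2(p) \<le> 2 h'(p)\<close>.\<close>

lemma Max_sum_le_twice_max_at_maximizers:
  fixes f g :: "'a \<Rightarrow> real"
  assumes "finite U" "U \<noteq> {}"
    and "\<forall>v\<in>U. 0 \<le> f v" "\<forall>v\<in>U. 0 \<le> g v"
    and "v1 \<in> U" "\<forall>v\<in>U. f v \<le> f v1"
    and "v2 \<in> U" "\<forall>v\<in>U. g v \<le> g v2"
  shows "Max ((\<lambda>v. f v + g v) ` U) / 2 \<le> max (f v1 + g v1) (f v2 + g v2)
       \<and> max (f v1 + g v1) (f v2 + g v2) \<le> Max ((\<lambda>v. f v + g v) ` U)"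
proof
  let ?h = "\<lambda>v. f v + g v"
  have fin: "finite (?h ` U)" "?h ` U \<noteq> {}" using assms(1,2) by auto
  obtain w where "w \<in> U" and w_max: "Max (?h ` U) = ?h w"
    using Max_in[OF fin] by auto
  have "?h w \<le> f v1 + g v2" using \<open>w \<in> U\<close> assms(6,8) by (simp add: add_mono)
  also have "\<dots> \<le> ?h v1 + ?h v2" using assms(3-5,7) by simp
  finally show "Max (?h ` U) / 2 \<le> max (?h v1) (?h v2)" using w_max by linarith
  show "max (?h v1) (?h v2) \<le> Max (?h ` U)"
    using fin assms(5,7) by (simp add: Max_ge_iff)
qed

text \<open>Over the tuples of \<open>T\<^sub>1\<close> with join value \<open>v\<close>, \<open>a\<^sub>v\<mu>\<^sub>v\<close> is the column sum and
  \<open>a\<^sub>v(\<mu>\<^sub>v\<^sup>2 + \<sigma>\<^sub>v\<^sup>2)\<close> the sum of squares; the coefficients below are named after them.\<close>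

definition hv_coeff_sq_of_sum :: "real \<Rightarrow> nat \<Rightarrow> real \<Rightarrow> real" where
  "hv_coeff_sq_of_sum e2 nb p = (1/e2 - 1/p) * real nb + (1/p - 1) * (real nb)^2"

definition hv_coeff_sum_of_sq :: "real \<Rightarrow> real \<Rightarrow> nat \<Rightarrow> real \<Rightarrow> real" where
  "hv_coeff_sum_of_sq e1 e2 nb p =
     (1/e1 - 1/p) * (real nb)^2 + (p/(e1*e2) - 1/e1 - 1/e2 + 1/p) * real nb"

lemma hv_eq_coeffs:
  "hv e1 e2 nb a mu s2 p =
     (real a)^2 * mu^2 * hv_coeff_sq_of_sum e2 nb p
   + real a * (mu^2 + s2) * hv_coeff_sum_of_sq e1 e2 nb p"
  unfolding hv_def hv_coeff_sq_of_sum_def hv_coeff_sum_of_sq_def by algebra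

lemma hv_coeff_sq_of_sum_nonneg:
  assumes "0 < e2" "e2 \<le> p" "p \<le> 1"
  shows "0 \<le> hv_coeff_sq_of_sum e2 nb p"
proof -
  have "1/p \<le> 1/e2" "1 \<le> 1/p" using assms by (auto simp: divide_simps)
  then show ?thesis unfolding hv_coeff_sq_of_sum_def by simp
qed

lemma hv_coeff_sum_of_sq_nonneg:
  assumes "0 < e1" "0 < e2" "e1 \<le> p" "e2 \<le> p"
  shows "0 \<le> hv_coeff_sum_of_sq e1 e2 nb p"
proof -
  have "p/(e1*e2) - 1/e1 - 1/e2 + 1/p = (p/e1 - 1) * (p/e2 - 1) / p"
    using assms by (simp add: field_simps)
  moreover have "0 \<le> p/e1 - 1" "0 \<le> p/e2 - 1" "1/p \<le> 1/e1"
    using assms by (auto simp: divide_simps)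
  ultimately show ?thesis
    unfolding hv_coeff_sum_of_sq_def using assms by simp
qed

theorem lemma7:
  fixes U :: "'a set" and e1 e2 p :: real and nb :: nat
    and a :: "'a \<Rightarrow> nat" and mu s2 :: "'a \<Rightarrow> real" and v1 v2 :: 'a
  assumes "finite U" and "U \<noteq> {}"
    and "0 < e1" "e1 \<le> 1" "0 < e2" "e2 \<le> 1"
    and "0 < nb"
    and "\<forall>v\<in>U. s2 v \<ge> 0"
    and "v1 \<in> U" "\<forall>v\<in>U. (real (a v))^2 * (mu v)^2 \<le> (real (a v1))^2 * (mu v1)^2"
    and "v2 \<in> U" "\<forall>v\<in>U. real (a v) * ((mu v)^2 + s2 v) \<le> real (a v2) * ((mu v2)^2 + s2 v2)"
    and "max e1 e2 \<le> p" "p \<le> 1"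
  shows "Max ((\<lambda>v. hv e1 e2 nb (a v) (mu v) (s2 v) p) ` U) / 2
           \<le> max (hv e1 e2 nb (a v1) (mu v1) (s2 v1) p) (hv e1 e2 nb (a v2) (mu v2) (s2 v2) p)
       \<and> max (hv e1 e2 nb (a v1) (mu v1) (s2 v1) p) (hv e1 e2 nb (a v2) (mu v2) (s2 v2) p)
           \<le> Max ((\<lambda>v. hv e1 e2 nb (a v) (mu v) (s2 v) p) ` U)"
proof -
  define f where "f v = (real (a v))^2 * (mu v)^2 * hv_coeff_sq_of_sum e2 nb p" for v
  define g where "g v = real (a v) * ((mu v)^2 + s2 v) * hv_coeff_sum_of_sq e1 e2 nb p" for v
  have hv_split: "hv e1 e2 nb (a v) (mu v) (s2 v) p = f v + g v" for v
    unfolding f_def g_def by (rule hv_eq_coeffs)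
  have "0 \<le> hv_coeff_sq_of_sum e2 nb p" "0 \<le> hv_coeff_sum_of_sq e1 e2 nb p"
    using assms by (auto intro: hv_coeff_sq_of_sum_nonneg hv_coeff_sum_of_sq_nonneg)
  then have "Max ((\<lambda>v. f v + g v) ` U) / 2 \<le> max (f v1 + g v1) (f v2 + g v2)
           \<and> max (f v1 + g v1) (f v2 + g v2) \<le> Max ((\<lambda>v. f v + g v) ` U)"
    using assms unfolding f_def g_def
    by (intro Max_sum_le_twice_max_at_maximizers) (auto intro: mult_right_mono)
  then show ?thesis by (simp only: hv_split)
qed

end
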